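(* Let $G$ be a graph and let $\mathcal R=\{G_v: v\in V(G)\}$ be a family of pairwise vertex-disjoint graphs. Then $$\gamma_{gr}(G\hookleftarrow \mathcal R)=\max \left\{\gamma_{gr}(G,I)+\sum_{v\in I} \gamma_{gr}(G_v)-|I| \;:\; I \text{ is an independent set of } G\right\}.$$
   Context: All graphs are finite and simple; $N[v]$ denotes the closed neighborhood. The $X$-join product $G\hookleftarrow \mathcal R$ has vertex set $\bigcup_{v\in V(G)}V(G_v)$, the edges of all $G_v$, and all edges between $V(G_u)$ and $V(G_v)$ whenever $uv\in E(G)$. For a sequence $S=(v_1,\dots,v_k)$ of distinct vertices, $\widehat S=\{v_1,\dots,v_k\}$, $|S|=k$, and $PN_S(v_i)=N[v_i]\setminus\bigcup_{j<i}N[v_j]$. $S$ is a legal dominating sequence of $G$ if $\widehat S$ is a dominating set and $PN_S(v_i)\neq\emptyset$ for all $i$; $\mathcal L(G)$ is the set of these. $\gamma_{gr}(G)$ (Grundy domination number) is the maximum length of a legal dominating sequence. For $S\in\mathcal L(G)$, the footprinter $f_S(x)$ of $x$ is the unique $v\in\widehat S$ with $x\in PN_S(v)$, and $I_S=\{v: f_S(v)=v\}$. For an independent set $I$, $\mathcal L(G,I)=\{S\in\mathcal L(G): I_S=I\}$ and $\gamma_{gr}(G,I)=\max\{|S|:S\in\mathcal L(G,I)\}$, where the maximum of the empty set is $-\infty$. *)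

theory Defs
  imports Main "HOL-Library.Extended_Real"
begin

type_synonym 'a graph = "'a set \<times> ('a \<times> 'a) set"

definition verts :: "'a graph \<Rightarrow> 'a set" where "verts G = fst G"
definition edges :: "'a graph \<Rightarrow> ('a \<times> 'a) set" where "edges G = snd G"

definition graph :: "'a graph \<Rightarrow> bool" where
  "graph G \<longleftrightarrow> finite (verts G) \<and> edges G \<subseteq> verts G \<times> verts G
     \<and> sym (edges G) \<and> irrefl (edges G)"

definition cnbh :: "'a graph \<Rightarrow> 'a \<Rightarrow> 'a set" where
  "cnbh G v = insert v {u. (v, u) \<in> edges G}"

definition independent :: "'a graph \<Rightarrow> 'a set \<Rightarrow> bool" where
  "independent G I \<longleftrightarrow> I \<subseteq> verts G \<and> (\<forall>u\<in>I. \<forall>v\<in>I. (u, v) \<notin> edges G)"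

definition dominating :: "'a graph \<Rightarrow> 'a set \<Rightarrow> bool" where
  "dominating G D \<longleftrightarrow> D \<subseteq> verts G \<and> (\<forall>x\<in>verts G. \<exists>v\<in>D. x \<in> cnbh G v)"

definition PN :: "'a graph \<Rightarrow> 'a list \<Rightarrow> nat \<Rightarrow> 'a set" where
  "PN G S i = cnbh G (S ! i) - (\<Union>j<i. cnbh G (S ! j))"

definition legal_dom_seqs :: "'a graph \<Rightarrow> 'a list set" where
  "legal_dom_seqs G = {S. distinct S \<and> dominating G (set S)
      \<and> (\<forall>i<length S. PN G S i \<noteq> {})}"

definition gamma_gr :: "'a graph \<Rightarrow> nat" where
  "gamma_gr G = Max (length ` legal_dom_seqs G)"

definition footprinter :: "'a graph \<Rightarrow> 'a list \<Rightarrow> 'a \<Rightarrow> 'a" where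
  "footprinter G S x = (THE v. \<exists>i<length S. S ! i = v \<and> x \<in> PN G S i)"

definition I_seq :: "'a graph \<Rightarrow> 'a list \<Rightarrow> 'a set" where
  "I_seq G S = {v \<in> verts G. footprinter G S v = v}"

definition legal_dom_seqs_I :: "'a graph \<Rightarrow> 'a set \<Rightarrow> 'a list set" where
  "legal_dom_seqs_I G I = {S \<in> legal_dom_seqs G. I_seq G S = I}"

definition gamma_gr_I :: "'a graph \<Rightarrow> 'a set \<Rightarrow> ereal" where
  "gamma_gr_I G I = (if legal_dom_seqs_I G I = {} then -\<infinity>
      else ereal (real (Max (length ` legal_dom_seqs_I G I))))"

definition xjoin :: "'a graph \<Rightarrow> ('a \<Rightarrow> 'b graph) \<Rightarrow> 'b graph" where
  "xjoin G R = ((\<Union>v\<in>verts G. verts (R v)),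
     (\<Union>v\<in>verts G. edges (R v)) \<union>
     {(x, y). \<exists>u v. (u, v) \<in> edges G \<and> x \<in> verts (R u) \<and> y \<in> verts (R v)})"

end

theory Submission
  imports Defs
begin

text \<open>
  Write H for the X-join. Given a legal dominating sequence S of G with I_S = I, replace every
  v in I by a Grundy sequence of G_v and every other entry v of S by a single vertex of G_v.
  The result is a legal dominating sequence of H: when a vertex of I is reached, nothing in its
  block is dominated yet, and every other entry v has a private neighbour w \<noteq> v in G whose
  whole block is still undominated. This gives the lower bound
  |S| + (sum over v in I of gamma_gr G_v) - |I|.

  Conversely, let T be a Grundy sequence of H and B its sequence of blocks. Dropping from B every
  entry without a private neighbour leaves a legal dominating sequence S of G; its self-footprinted
  vertices I are the blocks entered before any neighbouring block. A block outside I occurs at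
  most once in T, and the entries of T inside a block v in I form a legal sequence of G_v. Each
  block dropped from S owns a private neighbour lying in a block w in I, different blocks giving
  different w, and this neighbour extends the entries of T inside G_w to a longer legal sequence
  of G_w. Counting yields |T| \<le> |S| + (sum over v in I of gamma_gr G_v) - |I|.
\<close>

lemma length_eq_sum_length_filter:
  assumes "finite A" and "f ` set xs \<subseteq> A"
  shows "length xs = (\<Sum>v\<in>A. length (filter (\<lambda>x. f x = v) xs))"
  using assms(2)
proof (induction xs)
  case (Cons x xs)
  have "(\<Sum>v\<in>A. length (filter (\<lambda>y. f y = v) (x # xs))) =
      (\<Sum>v\<in>A. (if f x = v then 1 else 0) + length (filter (\<lambda>y. f y = v) xs))"
    by (intro sum.cong) auto
  also have "\<dots> = 1 + length xs"
    using Cons assms(1) by (simp add: sum.distrib)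
  finally show ?case
    by simp
qed simp

lemma sum_add_card_le_sum:
  fixes f h :: "'a \<Rightarrow> nat"
  assumes "finite A" and "inj_on g B" and "g ` B \<subseteq> A"
    and "\<And>b. b \<in> B \<Longrightarrow> f (g b) < h (g b)" and "\<And>a. a \<in> A \<Longrightarrow> f a \<le> h a"
  shows "sum f A + card B \<le> sum h A"
proof -
  have "card B = (\<Sum>a\<in>A. if a \<in> g ` B then 1 else 0)"
    using assms(1-3) card_image[OF assms(2)] by (simp add: sum.inter_restrict[symmetric] Int_absorb1)
  then have "sum f A + card B = (\<Sum>a\<in>A. f a + (if a \<in> g ` B then 1 else 0))"
    by (simp add: sum.distrib)
  also have "\<dots> \<le> sum h A"
    using assms(4,5) by (intro sum_mono) (auto simp: Suc_leI)
  finally show ?thesis .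
qed

section \<open>Legal sequences\<close>

definition covered :: "'a graph \<Rightarrow> 'a list \<Rightarrow> 'a set" where
  "covered G xs = (\<Union>x\<in>set xs. cnbh G x)"

definition legal :: "'a graph \<Rightarrow> 'a list \<Rightarrow> bool" where
  "legal G xs \<longleftrightarrow> (\<forall>i<length xs. cnbh G (xs ! i) - covered G (take i xs) \<noteq> {})"

lemma cnbh_self [simp]: "v \<in> cnbh G v"
  by (simp add: cnbh_def)

lemma mem_cnbh_iff: "v \<in> cnbh G u \<longleftrightarrow> v = u \<or> (u, v) \<in> edges G"
  by (auto simp: cnbh_def)

lemma covered_Nil [simp]: "covered G [] = {}"
  and covered_Cons [simp]: "covered G (x # xs) = cnbh G x \<union> covered G xs"
  and covered_append [simp]: "covered G (xs @ ys) = covered G xs \<union> covered G ys"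
  by (auto simp: covered_def)

lemma mem_covered_take_iff:
  "x \<in> covered G (take i xs) \<longleftrightarrow> (\<exists>j<i. j < length xs \<and> x \<in> cnbh G (xs ! j))"
  by (force simp: covered_def in_set_conv_nth)

lemma PN_eq_covered: "i \<le> length S \<Longrightarrow> PN G S i = cnbh G (S ! i) - covered G (take i S)"
  by (auto simp: PN_def mem_covered_take_iff)

lemma mem_PN_iff: "y \<in> PN G S j \<longleftrightarrow> y \<in> cnbh G (S ! j) \<and> (\<forall>i<j. y \<notin> cnbh G (S ! i))"
  by (auto simp: PN_def)

lemma legal_Nil [simp]: "legal G []"
  by (simp add: legal_def)

lemma legal_append:
  "legal G (xs @ ys) \<longleftrightarrow>
     legal G xs \<and> (\<forall>i<length ys. cnbh G (ys ! i) - covered G xs - covered G (take i ys) \<noteq> {})"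
proof -
  have all_less_append: "(\<forall>i<length (xs @ ys). P i) \<longleftrightarrow>
      (\<forall>i<length xs. P i) \<and> (\<forall>i<length ys. P (length xs + i))" for P
    by (auto, metis add_diff_inverse_nat nat_add_left_cancel_less)
  show ?thesis
    unfolding legal_def all_less_append
    by (simp add: nth_append Diff_eq Int_assoc Int_commute Int_left_commute)
qed

lemma legal_snoc: "legal G (xs @ [x]) \<longleftrightarrow> legal G xs \<and> \<not> cnbh G x \<subseteq> covered G xs"
  by (simp add: legal_append)

lemma legal_imp_distinct: "legal G xs \<Longrightarrow> distinct xs"
proof (induction xs rule: rev_induct)
  case (snoc x xs)
  then have "x \<notin> set xs"
    by (auto simp: legal_snoc covered_def)
  with snoc show ?case
    by (simp add: legal_snoc)
qed simp

lemma legal_filter: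
  assumes "\<And>j. j < length xs \<Longrightarrow> P (xs ! j) \<Longrightarrow>
    \<exists>y\<in>cnbh G (xs ! j). \<forall>i<j. P (xs ! i) \<longrightarrow> y \<notin> cnbh G (xs ! i)"
  shows "legal G (filter P xs)"
  using assms
proof (induction xs rule: rev_induct)
  case (snoc x xs)
  have "legal G (filter P xs)"
  proof (rule snoc.IH)
    fix j
    assume "j < length xs" and "P (xs ! j)"
    with snoc.prems[of j] show "\<exists>y\<in>cnbh G (xs ! j). \<forall>i<j. P (xs ! i) \<longrightarrow> y \<notin> cnbh G (xs ! i)"
      by (auto simp: nth_append)
  qed
  moreover have "\<not> cnbh G x \<subseteq> covered G (filter P xs)" if Px: "P x"
  proof -
    obtain y where "y \<in> cnbh G x" "\<forall>i<length xs. P (xs ! i) \<longrightarrow> y \<notin> cnbh G (xs ! i)"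
      using snoc.prems[of "length xs"] Px by (auto simp: nth_append)
    then show ?thesis
      by (auto simp: covered_def in_set_conv_nth)
  qed
  ultimately show ?case
    by (simp add: legal_snoc)
qed simp

lemma dominating_iff_covered:
  "dominating G (set xs) \<longleftrightarrow> set xs \<subseteq> verts G \<and> verts G \<subseteq> covered G xs"
  by (auto simp: dominating_def covered_def)

lemma legal_dom_seqs_iff: "S \<in> legal_dom_seqs G \<longleftrightarrow> legal G S \<and> dominating G (set S)"
proof -
  have "legal G S \<longleftrightarrow> (\<forall>i<length S. PN G S i \<noteq> {})"
    by (simp add: legal_def PN_eq_covered)
  then show ?thesis
    using legal_imp_distinct[of G S] by (auto simp: legal_dom_seqs_def)
qed

section \<open>Pruning and Grundy sequences\<close>

definition prune :: "'a graph \<Rightarrow> 'a list \<Rightarrow> 'a list" where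
  "prune G = foldl (\<lambda>S x. if cnbh G x \<subseteq> covered G S then S else S @ [x]) []"

lemma prune_Nil [simp]: "prune G [] = []"
  by (simp add: prune_def)

lemma prune_snoc:
  "prune G (xs @ [x]) =
    (if cnbh G x \<subseteq> covered G (prune G xs) then prune G xs else prune G xs @ [x])"
  by (simp add: prune_def)

lemma covered_prune [simp]: "covered G (prune G xs) = covered G xs"
  by (induction xs rule: rev_induct) (auto simp: prune_snoc)

lemma set_prune_subset: "set (prune G xs) \<subseteq> set xs"
  by (induction xs rule: rev_induct) (auto simp: prune_snoc)

lemma legal_prune: "legal G (prune G xs)"
  by (induction xs rule: rev_induct) (auto simp: prune_snoc legal_snoc)

lemma prune_legal_dom_seq: "dominating G (set xs) \<Longrightarrow> prune G xs \<in> legal_dom_seqs G"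
  using set_prune_subset[of G xs] by (auto simp: legal_dom_seqs_iff dominating_iff_covered legal_prune)

lemma prune_append: "\<exists>zs. prune G (xs @ ys) = prune G xs @ zs"
proof (induction ys rule: rev_induct)
  case (snoc y ys)
  then obtain zs where "prune G (xs @ ys) = prune G xs @ zs"
    by blast
  then show ?case
    unfolding append_assoc[symmetric] prune_snoc by (metis append_assoc)
qed simp

lemma prune_legal_id: "legal G xs \<Longrightarrow> prune G xs = xs"
  by (induction xs rule: rev_induct) (auto simp: prune_snoc legal_snoc)

lemma nth_mem_prune:
  assumes "k < length xs" and "\<not> cnbh G (xs ! k) \<subseteq> covered G (take k xs)"
  shows "xs ! k \<in> set (prune G xs)"
proof -
  have "take (Suc k) xs = take k xs @ [xs ! k]"
    using assms(1) by (simp add: take_Suc_conv_app_nth)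
  then have "prune G (take (Suc k) xs) = prune G (take k xs) @ [xs ! k]"
    using assms(2) by (simp add: prune_snoc)
  moreover obtain zs where "prune G xs = prune G (take (Suc k) xs) @ zs"
    using prune_append[of G "take (Suc k) xs" "drop (Suc k) xs"] by auto
  ultimately show ?thesis
    by simp
qed

lemma legal_extends_to_legal_dom_seq:
  assumes "finite (verts G)" and "legal G xs" and "set xs \<subseteq> verts G"
  shows "\<exists>ys. xs @ ys \<in> legal_dom_seqs G"
proof -
  obtain vs where vs: "set vs = verts G"
    using finite_list[OF assms(1)] by blast
  have "dominating G (set (xs @ vs))"
    unfolding dominating_iff_covered using assms(3) vs by (auto simp: covered_def)
  moreover obtain ys where "prune G (xs @ vs) = xs @ ys"
    using prune_append[of G xs vs] prune_legal_id[OF assms(2)] by auto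
  ultimately show ?thesis
    using prune_legal_dom_seq by metis
qed

lemma finite_legal_dom_seqs:
  assumes "finite (verts G)"
  shows "finite (legal_dom_seqs G)"
proof -
  have "legal_dom_seqs G \<subseteq> {xs. set xs \<subseteq> verts G \<and> length xs \<le> card (verts G)}"
    by (auto simp: legal_dom_seqs_def dominating_def intro: card_mono[OF assms] simp flip: distinct_card)
  then show ?thesis
    using finite_lists_length_le[OF assms] finite_subset by blast
qed

lemma length_le_gamma_gr:
  assumes "finite (verts G)" and "legal G xs" and "set xs \<subseteq> verts G"
  shows "length xs \<le> gamma_gr G"
proof -
  obtain ys where "xs @ ys \<in> legal_dom_seqs G"
    using legal_extends_to_legal_dom_seq[OF assms] by blast
  then have "length (xs @ ys) \<le> gamma_gr G"
    unfolding gamma_gr_def using finite_legal_dom_seqs[OF assms(1)]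
    by (intro Max_ge) (auto simp del: length_append)
  then show ?thesis
    by simp
qed

lemma gamma_gr_attained:
  assumes "finite (verts G)"
  shows "\<exists>S\<in>legal_dom_seqs G. length S = gamma_gr G"
proof -
  have "legal_dom_seqs G \<noteq> {}"
    using legal_extends_to_legal_dom_seq[OF assms, of "[]"] by auto
  then have "gamma_gr G \<in> length ` legal_dom_seqs G"
    unfolding gamma_gr_def using finite_legal_dom_seqs[OF assms] by (intro Max_in) auto
  then show ?thesis
    by auto
qed

definition grundy_seq :: "'a graph \<Rightarrow> 'a list" where
  "grundy_seq G = (SOME S. S \<in> legal_dom_seqs G \<and> length S = gamma_gr G)"

lemma grundy_seq:
  assumes "finite (verts G)"
  shows "grundy_seq G \<in> legal_dom_seqs G" and "length (grundy_seq G) = gamma_gr G"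
  using someI_ex[OF gamma_gr_attained[OF assms, unfolded Bex_def]] by (auto simp: grundy_seq_def)

section \<open>Footprinters\<close>

lemma footprinter_eqI:
  assumes "i < length S" and "x \<in> cnbh G (S ! i)" and "x \<notin> covered G (take i S)"
  shows "footprinter G S x = S ! i"
  unfolding footprinter_def
proof (rule the_equality)
  show "\<exists>i'<length S. S ! i' = S ! i \<and> x \<in> PN G S i'"
    using assms by (auto simp: PN_eq_covered)
next
  fix v
  assume "\<exists>i'<length S. S ! i' = v \<and> x \<in> PN G S i'"
  then obtain i' where i': "i' < length S" "S ! i' = v" "x \<in> PN G S i'"
    by blast
  have "\<not> i' < i" and "\<not> i < i'"
    using assms i' by (auto simp: PN_eq_covered mem_covered_take_iff)
  then show "v = S ! i"
    using i' by simp
qed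

lemma footprinterE:
  assumes "S \<in> legal_dom_seqs G" and "x \<in> verts G"
  obtains i where "i < length S" "x \<in> cnbh G (S ! i)" "x \<notin> covered G (take i S)"
    and "footprinter G S x = S ! i"
proof -
  obtain u where "u \<in> set S" "x \<in> cnbh G u"
    using assms by (auto simp: legal_dom_seqs_iff dominating_iff_covered covered_def)
  then have "\<exists>i. i < length S \<and> x \<in> cnbh G (S ! i)"
    by (auto simp: in_set_conv_nth)
  then obtain i where "i < length S \<and> x \<in> cnbh G (S ! i)"
    and "\<forall>j<i. \<not> (j < length S \<and> x \<in> cnbh G (S ! j))"
    unfolding exists_least_iff[where P = "\<lambda>i. i < length S \<and> x \<in> cnbh G (S ! i)"] by blast
  then show ?thesis
    using that footprinter_eqI by (metis mem_covered_take_iff)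
qed

definition self_private :: "'a graph \<Rightarrow> 'a list \<Rightarrow> 'a \<Rightarrow> bool" where
  "self_private G xs v \<longleftrightarrow> (\<exists>k<length xs. xs ! k = v \<and> v \<notin> covered G (take k xs))"

lemma I_seq_eq_self_private:
  assumes "S \<in> legal_dom_seqs G"
  shows "I_seq G S = {v. self_private G S v}"
proof (intro set_eqI iffI)
  fix v
  assume "v \<in> I_seq G S"
  then obtain i where "i < length S" "v \<notin> covered G (take i S)" "v = S ! i"
    using footprinterE[OF assms] by (metis (mono_tags) I_seq_def mem_Collect_eq)
  then show "v \<in> {v. self_private G S v}"
    by (auto simp: self_private_def)
next
  fix v
  assume "v \<in> {v. self_private G S v}"
  then obtain k where k: "k < length S" "S ! k = v" "v \<notin> covered G (take k S)"
    by (auto simp: self_private_def)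
  moreover have "v \<in> verts G"
    using assms k by (auto simp: legal_dom_seqs_iff dominating_iff_covered)
  ultimately show "v \<in> I_seq G S"
    using footprinter_eqI[of k S v G] by (auto simp: I_seq_def)
qed

lemma self_private_snoc:
  "self_private G (xs @ [x]) v \<longleftrightarrow> self_private G xs v \<or> (x = v \<and> v \<notin> covered G xs)"
  unfolding self_private_def by (auto simp: Ex_less_Suc nth_append cong: conj_cong)

lemma self_private_prune: "self_private G (prune G xs) v \<longleftrightarrow> self_private G xs v"
proof (induction xs rule: rev_induct)
  case (snoc x xs)
  show ?case
  proof (cases "cnbh G x \<subseteq> covered G xs")
    case True
    then have "prune G (xs @ [x]) = prune G xs" and "\<not> (x = v \<and> v \<notin> covered G xs)"
      using cnbh_self[of x G] by (auto simp: prune_snoc)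
    then show ?thesis
      using snoc.IH by (simp only: self_private_snoc) blast
  next
    case False
    then show ?thesis
      using snoc.IH by (simp add: prune_snoc self_private_snoc)
  qed
qed (simp add: self_private_def)

lemma I_seq_prune:
  "dominating G (set xs) \<Longrightarrow> I_seq G (prune G xs) = {v. self_private G xs v}"
  by (simp add: I_seq_eq_self_private prune_legal_dom_seq self_private_prune)

lemma I_seq_subset_set: "S \<in> legal_dom_seqs G \<Longrightarrow> I_seq G S \<subseteq> set S"
  by (auto simp: I_seq_eq_self_private self_private_def)

lemma nth_mem_I_seq_iff:
  assumes "S \<in> legal_dom_seqs G" and "k < length S"
  shows "S ! k \<in> I_seq G S \<longleftrightarrow> S ! k \<notin> covered G (take k S)"
proof -
  have "distinct S"
    using assms(1) legal_imp_distinct[of G S] by (simp add: legal_dom_seqs_iff)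
  then show ?thesis
    using assms by (auto simp: I_seq_eq_self_private self_private_def nth_eq_iff_index_eq)
qed

lemma neighbour_in_set_if_not_I_seq:
  assumes "S \<in> legal_dom_seqs G" and "v \<in> verts G" and "v \<notin> I_seq G S"
  shows "\<exists>u\<in>set S. (u, v) \<in> edges G"
proof -
  obtain i where "i < length S" "v \<in> cnbh G (S ! i)" "footprinter G S v = S ! i"
    using footprinterE[OF assms(1,2)] by blast
  with assms(2,3) show ?thesis
    by (auto simp: I_seq_def mem_cnbh_iff)
qed

lemma independent_I_seq:
  assumes "graph G" and "S \<in> legal_dom_seqs G"
  shows "independent G (I_seq G S)"
proof -
  have no_edge: "(S ! i, S ! j) \<notin> edges G" if "i < j" "j < length S" "S ! j \<in> I_seq G S" for i j
  proof
    assume "(S ! i, S ! j) \<in> edges G"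
    then have "S ! j \<in> covered G (take j S)"
      using that by (auto simp: mem_covered_take_iff mem_cnbh_iff)
    then show False
      using that nth_mem_I_seq_iff[OF assms(2)] by blast
  qed
  have "(u, v) \<notin> edges G" if "u \<in> I_seq G S" "v \<in> I_seq G S" for u v
  proof
    assume uv: "(u, v) \<in> edges G"
    then have vu: "(v, u) \<in> edges G" and "u \<noteq> v"
      using assms(1) by (auto simp: graph_def sym_def irrefl_def)
    have "u \<in> set S" "v \<in> set S"
      using that I_seq_subset_set[OF assms(2)] by blast+
    then obtain i j where ij: "i < length S" "j < length S" "S ! i = u" "S ! j = v"
      by (auto simp: in_set_conv_nth)
    with \<open>u \<noteq> v\<close> have "i < j \<or> j < i"
      using nat_neq_iff by blast
    then show False
    proof
      assume "i < j"
      then show False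
        using no_edge[of i j] ij uv that(2) by simp
    next
      assume "j < i"
      then show False
        using no_edge[of j i] ij vu that(1) by simp
    qed
  qed
  then show ?thesis
    by (auto simp: independent_def I_seq_def)
qed

lemma finite_legal_dom_seqs_I: "finite (verts G) \<Longrightarrow> finite (legal_dom_seqs_I G I)"
  using finite_legal_dom_seqs[of G] by (simp add: legal_dom_seqs_I_def)

lemma gamma_gr_I_ge:
  assumes "finite (verts G)" and "S \<in> legal_dom_seqs G"
  shows "ereal (length S) \<le> gamma_gr_I G (I_seq G S)"
proof -
  have "S \<in> legal_dom_seqs_I G (I_seq G S)"
    using assms(2) by (simp add: legal_dom_seqs_I_def)
  then show ?thesis
    using finite_legal_dom_seqs_I[OF assms(1)] by (auto simp: gamma_gr_I_def)
qed

lemma gamma_gr_I_cases: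
  assumes "finite (verts G)"
  shows "gamma_gr_I G I = -\<infinity> \<or>
    (\<exists>S\<in>legal_dom_seqs G. I_seq G S = I \<and> gamma_gr_I G I = ereal (length S))"
proof (cases "legal_dom_seqs_I G I = {}")
  case False
  then have "Max (length ` legal_dom_seqs_I G I) \<in> length ` legal_dom_seqs_I G I"
    using finite_legal_dom_seqs_I[OF assms] by (intro Max_in) auto
  then show ?thesis
    using False by (auto simp: gamma_gr_I_def legal_dom_seqs_I_def)
qed (simp add: gamma_gr_I_def)

section \<open>The X-join\<close>

locale xjoin_family =
  fixes G :: "'a graph" and R :: "'a \<Rightarrow> 'b graph"
  assumes graph_G: "graph G"
    and graph_R: "v \<in> verts G \<Longrightarrow> graph (R v)"
    and verts_R_nonempty: "v \<in> verts G \<Longrightarrow> verts (R v) \<noteq> {}"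
    and verts_R_disjoint:
      "u \<in> verts G \<Longrightarrow> v \<in> verts G \<Longrightarrow> u \<noteq> v \<Longrightarrow> verts (R u) \<inter> verts (R v) = {}"
begin

abbreviation H :: "'b graph" where
  "H \<equiv> xjoin G R"

definition block :: "'b \<Rightarrow> 'a" where
  "block x = (THE v. v \<in> verts G \<and> x \<in> verts (R v))"

lemma finite_verts_G: "finite (verts G)"
  using graph_G by (simp add: graph_def)

lemma finite_verts_R: "v \<in> verts G \<Longrightarrow> finite (verts (R v))"
  using graph_R by (simp add: graph_def)

lemma edge_G_in_verts: "(u, w) \<in> edges G \<Longrightarrow> u \<in> verts G \<and> w \<in> verts G"
  using graph_G by (auto simp: graph_def)

lemma no_loop_G: "(v, v) \<notin> edges G"
  using graph_G by (auto simp: graph_def irrefl_def)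

lemma verts_xjoin: "verts H = (\<Union>v\<in>verts G. verts (R v))"
  by (simp add: xjoin_def verts_def)

lemma finite_verts_xjoin: "finite (verts H)"
  using finite_verts_G finite_verts_R by (simp add: verts_xjoin)

lemma block_eqI: "v \<in> verts G \<Longrightarrow> x \<in> verts (R v) \<Longrightarrow> block x = v"
  unfolding block_def using verts_R_disjoint by (intro the_equality) auto

lemma block_in_verts: "x \<in> verts H \<Longrightarrow> block x \<in> verts G \<and> x \<in> verts (R (block x))"
  using block_eqI by (auto simp: verts_xjoin)

lemma edges_xjoinE:
  assumes "(x, y) \<in> edges H"
  obtains v where "v \<in> verts G" "(x, y) \<in> edges (R v)"
    | u w where "(u, w) \<in> edges G" "x \<in> verts (R u)" "y \<in> verts (R w)"
  using assms by (auto simp: xjoin_def edges_def)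

lemma edges_xjoin_iff:
  assumes "u \<in> verts G" "w \<in> verts G" "x \<in> verts (R u)" "y \<in> verts (R w)"
  shows "(x, y) \<in> edges H \<longleftrightarrow> (u = w \<and> (x, y) \<in> edges (R u)) \<or> (u, w) \<in> edges G"
proof
  assume "(x, y) \<in> edges H"
  then show "(u = w \<and> (x, y) \<in> edges (R u)) \<or> (u, w) \<in> edges G"
  proof (cases rule: edges_xjoinE)
    case (1 v)
    then have "x \<in> verts (R v)" "y \<in> verts (R v)"
      using graph_R by (auto simp: graph_def)
    with 1 assms show ?thesis
      using block_eqI by metis
  next
    case (2 u' w')
    then have "u' \<in> verts G" "w' \<in> verts G"
      using edge_G_in_verts by auto
    with 2 assms show ?thesis
      using block_eqI by metis
  qed
next
  assume "(u = w \<and> (x, y) \<in> edges (R u)) \<or> (u, w) \<in> edges G"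
  then show "(x, y) \<in> edges H"
    using assms by (auto simp: xjoin_def edges_def)
qed

lemma cnbh_xjoin_iff:
  assumes "u \<in> verts G" "w \<in> verts G" "x \<in> verts (R u)" "y \<in> verts (R w)"
  shows "y \<in> cnbh H x \<longleftrightarrow> (u = w \<and> y \<in> cnbh (R u) x) \<or> (u, w) \<in> edges G"
proof -
  have "y = x \<Longrightarrow> u = w"
    using assms block_eqI by metis
  then show ?thesis
    using edges_xjoin_iff[OF assms] by (auto simp: cnbh_def)
qed

lemma edges_xjoin_subset: "edges H \<subseteq> verts H \<times> verts H"
proof (rule subrelI)
  fix x y
  assume "(x, y) \<in> edges H"
  then show "(x, y) \<in> verts H \<times> verts H"
  proof (cases rule: edges_xjoinE)
    case (1 v)
    then show ?thesis
      using graph_R[OF 1(1)] by (auto simp: graph_def verts_xjoin)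
  next
    case (2 u w)
    then show ?thesis
      using edge_G_in_verts[OF 2(1)] by (auto simp: verts_xjoin)
  qed
qed

lemma cnbh_xjoin_subset: "x \<in> verts H \<Longrightarrow> cnbh H x \<subseteq> verts H"
  using edges_xjoin_subset by (auto simp: cnbh_def)

subsection \<open>Lower bound\<close>

definition block_seq :: "'a set \<Rightarrow> 'a \<Rightarrow> 'b list" where
  "block_seq I v = (if v \<in> I then grundy_seq (R v) else [SOME x. x \<in> verts (R v)])"

definition blowup :: "'a set \<Rightarrow> 'a list \<Rightarrow> 'b list" where
  "blowup I S = concat (map (block_seq I) S)"

lemma grundy_seq_R:
  assumes "v \<in> verts G"
  shows "legal (R v) (grundy_seq (R v))" and "set (grundy_seq (R v)) \<subseteq> verts (R v)"
    and "verts (R v) \<subseteq> covered (R v) (grundy_seq (R v))"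
  using grundy_seq(1)[OF finite_verts_R[OF assms]] by (auto simp: legal_dom_seqs_iff dominating_iff_covered)

lemma block_seq_in_block:
  assumes "v \<in> verts G"
  shows "set (block_seq I v) \<subseteq> verts (R v)" and "block_seq I v \<noteq> []"
proof -
  have "grundy_seq (R v) \<noteq> []"
    using grundy_seq_R(3)[OF assms] verts_R_nonempty[OF assms] by auto
  moreover have "(SOME x. x \<in> verts (R v)) \<in> verts (R v)"
    using verts_R_nonempty[OF assms] by (simp add: some_in_eq)
  ultimately show "set (block_seq I v) \<subseteq> verts (R v)" and "block_seq I v \<noteq> []"
    using grundy_seq_R(2)[OF assms] by (auto simp: block_seq_def)
qed

lemma length_block_seq:
  "v \<in> verts G \<Longrightarrow> length (block_seq I v) = (if v \<in> I then gamma_gr (R v) else 1)"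
  by (simp add: block_seq_def grundy_seq(2)[OF finite_verts_R])

lemma covered_xjoin_within_block:
  assumes "v \<in> verts G" and "set ts \<subseteq> verts (R v)" and "y \<in> verts (R v)"
  shows "y \<in> covered H ts \<longleftrightarrow> y \<in> covered (R v) ts"
  using assms cnbh_xjoin_iff[OF assms(1) assms(1) _ assms(3)] no_loop_G by (auto simp: covered_def)

lemma covered_blowup_imp_covered:
  assumes "set xs \<subseteq> verts G" and "w \<in> verts G" and "y \<in> verts (R w)"
    and "y \<in> covered H (blowup I xs)"
  shows "w \<in> covered G xs"
proof -
  obtain u x where ux: "u \<in> set xs" "x \<in> set (block_seq I u)" "y \<in> cnbh H x"
    using assms(4) by (auto simp: blowup_def covered_def)
  moreover have "u \<in> verts G" and "x \<in> verts (R u)"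
    using ux assms(1) block_seq_in_block(1) by auto
  ultimately show ?thesis
    using cnbh_xjoin_iff[of u w x y] assms(2,3) by (auto simp: covered_def mem_cnbh_iff)
qed

lemma legal_append_block:
  assumes "legal H xs" and v: "v \<in> verts G" and ts: "legal (R v) ts" "set ts \<subseteq> verts (R v)"
    and fresh: "covered H xs \<inter> verts (R v) = {}"
  shows "legal H (xs @ ts)"
  unfolding legal_append
proof (intro conjI allI impI)
  fix i
  assume i: "i < length ts"
  obtain y where y: "y \<in> cnbh (R v) (ts ! i)" "y \<notin> covered (R v) (take i ts)"
    using ts(1) i by (auto simp: legal_def)
  have ti: "ts ! i \<in> verts (R v)"
    using ts(2) i by auto
  have yv: "y \<in> verts (R v)"
    using graph_R[OF v] ti y(1) by (auto simp: graph_def cnbh_def)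
  have "y \<in> cnbh H (ts ! i)"
    using cnbh_xjoin_iff[OF v v ti yv] y(1) by simp
  moreover have "set (take i ts) \<subseteq> verts (R v)"
    using ts(2) set_take_subset by (rule order.trans[rotated])
  then have "y \<notin> covered H (take i ts)"
    using covered_xjoin_within_block[OF v _ yv] y(2) by blast
  ultimately show "cnbh H (ts ! i) - covered H xs - covered H (take i ts) \<noteq> {}"
    using fresh yv by blast
qed (fact assms)

lemma legal_blowup_snoc:
  assumes legal: "legal H (blowup I xs)" and xs: "set xs \<subseteq> verts G" and v: "v \<in> verts G"
    and new: "\<not> cnbh G v \<subseteq> covered G xs" and I: "v \<in> I \<longleftrightarrow> v \<notin> covered G xs"
  shows "legal H (blowup I (xs @ [v]))"
proof (cases "v \<in> I")
  case True
  then have "covered H (blowup I xs) \<inter> verts (R v) = {}"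
    using covered_blowup_imp_covered[OF xs v] I by blast
  then show ?thesis
    using legal_append_block[OF legal v grundy_seq_R(1,2)[OF v]] True
    by (simp add: blowup_def block_seq_def)
next
  case False
  then obtain w where w: "w \<in> cnbh G v" "w \<notin> covered G xs" "w \<noteq> v"
    using new I by auto
  then have vw: "(v, w) \<in> edges G"
    by (simp add: mem_cnbh_iff)
  then have wG: "w \<in> verts G"
    using edge_G_in_verts by blast
  obtain y where y: "y \<in> verts (R w)"
    using verts_R_nonempty[OF wG] by auto
  have "(SOME x. x \<in> verts (R v)) \<in> verts (R v)"
    using verts_R_nonempty[OF v] by (simp add: some_in_eq)
  then have "y \<in> cnbh H (SOME x. x \<in> verts (R v))"
    using cnbh_xjoin_iff[OF v wG _ y] vw by simp
  moreover have "y \<notin> covered H (blowup I xs)"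
    using covered_blowup_imp_covered[OF xs wG y] w(2) by blast
  ultimately show ?thesis
    using legal False by (auto simp: blowup_def block_seq_def legal_snoc)
qed

lemma legal_blowup:
  assumes S: "S \<in> legal_dom_seqs G"
  shows "legal H (blowup (I_seq G S) S)"
proof -
  have S_legal: "legal G S" and S_verts: "set S \<subseteq> verts G"
    using S by (auto simp: legal_dom_seqs_iff dominating_iff_covered)
  have "legal H (blowup (I_seq G S) (take k S))" if "k \<le> length S" for k
    using that
  proof (induction k)
    case (Suc k)
    then have k: "k < length S"
      by simp
    have "take (Suc k) S = take k S @ [S ! k]"
      using k by (simp add: take_Suc_conv_app_nth)
    moreover have "set (take k S) \<subseteq> verts G"
      using S_verts set_take_subset by fastforce
    moreover have "S ! k \<in> verts G"
      using S_verts k by auto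
    moreover have "\<not> cnbh G (S ! k) \<subseteq> covered G (take k S)"
      using S_legal k by (auto simp: legal_def)
    ultimately show ?case
      using Suc legal_blowup_snoc nth_mem_I_seq_iff[OF S k] by simp
  qed (simp add: blowup_def)
  from this[of "length S"] show ?thesis
    by simp
qed

lemma dominating_blowup:
  assumes S: "S \<in> legal_dom_seqs G"
  shows "dominating H (set (blowup (I_seq G S) S))"
  unfolding dominating_iff_covered
proof
  have S_verts: "set S \<subseteq> verts G"
    using S by (auto simp: legal_dom_seqs_iff dominating_iff_covered)
  then show "set (blowup (I_seq G S) S) \<subseteq> verts H"
    using block_seq_in_block(1) by (fastforce simp: blowup_def verts_xjoin)
  show "verts H \<subseteq> covered H (blowup (I_seq G S) S)"
  proof
    fix y
    assume "y \<in> verts H"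
    then obtain w where w: "w \<in> verts G" "y \<in> verts (R w)"
      by (auto simp: verts_xjoin)
    show "y \<in> covered H (blowup (I_seq G S) S)"
    proof (cases "w \<in> I_seq G S")
      case True
      then have "w \<in> set S" and "block_seq (I_seq G S) w = grundy_seq (R w)"
        using I_seq_subset_set[OF S] by (auto simp: block_seq_def)
      moreover have "y \<in> covered H (grundy_seq (R w))"
        using covered_xjoin_within_block[OF w(1) grundy_seq_R(2)[OF w(1)] w(2)]
          grundy_seq_R(3)[OF w(1)] w(2) by blast
      ultimately show ?thesis
        by (force simp: blowup_def covered_def)
    next
      case False
      then obtain u where u: "u \<in> set S" "(u, w) \<in> edges G"
        using neighbour_in_set_if_not_I_seq[OF S w(1)] by blast
      then have uG: "u \<in> verts G"
        using S_verts by auto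
      obtain x where x: "x \<in> set (block_seq (I_seq G S) u)"
        using block_seq_in_block(2)[OF uG] by (metis list.set_sel(1))
      then have "y \<in> cnbh H x"
        using cnbh_xjoin_iff[OF uG w(1) _ w(2)] block_seq_in_block(1)[OF uG] u(2) by auto
      then show ?thesis
        using x u(1) by (auto simp: blowup_def covered_def)
    qed
  qed
qed

lemma length_blowup:
  assumes S: "S \<in> legal_dom_seqs G"
  shows "length (blowup (I_seq G S) S) + card (I_seq G S)
    = length S + (\<Sum>v\<in>I_seq G S. gamma_gr (R v))"
proof -
  let ?I = "I_seq G S"
  have "distinct S" and S_verts: "set S \<subseteq> verts G"
    using S legal_imp_distinct[of G S] by (auto simp: legal_dom_seqs_iff dominating_iff_covered)
  have I_sub: "?I \<subseteq> set S"
    by (rule I_seq_subset_set[OF S])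
  have "length (blowup ?I S) = (\<Sum>v\<in>set S. length (block_seq ?I v))"
    using \<open>distinct S\<close> by (simp add: blowup_def length_concat sum_list_distinct_conv_sum_set)
  also have "\<dots> = (\<Sum>v\<in>set S - ?I. length (block_seq ?I v))
      + (\<Sum>v\<in>?I. length (block_seq ?I v))"
    using I_sub by (simp add: sum.subset_diff)
  also have "\<dots> = card (set S - ?I) + (\<Sum>v\<in>?I. gamma_gr (R v))"
    using S_verts I_sub by (simp add: length_block_seq subset_iff)
  finally show ?thesis
    using card_Diff_subset[OF finite_subset[OF I_sub] I_sub] card_mono[OF _ I_sub]
      distinct_card[OF \<open>distinct S\<close>] by simp
qed

lemma grundy_lower_bound:
  assumes "S \<in> legal_dom_seqs G"
  shows "length S + (\<Sum>v\<in>I_seq G S. gamma_gr (R v)) \<le> gamma_gr H + card (I_seq G S)"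
proof -
  have "length (blowup (I_seq G S) S) \<le> gamma_gr H"
    using length_le_gamma_gr[OF finite_verts_xjoin legal_blowup[OF assms]] dominating_blowup[OF assms]
    by (simp add: dominating_iff_covered)
  then show ?thesis
    using length_blowup[OF assms] by linarith
qed

end

subsection \<open>Upper bound\<close>

locale xjoin_legal_seq = xjoin_family +
  fixes T :: "'b list"
  assumes T_legal_dom: "T \<in> legal_dom_seqs (xjoin G R)"
begin

definition blocks :: "'a list" where
  "blocks = map block T"

definition first :: "'a \<Rightarrow> nat" where
  "first v = (LEAST k. k < length T \<and> blocks ! k = v)"

definition part :: "'a \<Rightarrow> 'b list" where
  "part v = filter (\<lambda>x. block x = v) T"

definition I_blocks :: "'a set" where
  "I_blocks = {v. self_private G blocks v}"

definition dropped :: "'a set" where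
  "dropped = set blocks - set (prune G blocks)"

lemma T_legal: "legal H T"
  and T_verts: "set T \<subseteq> verts H"
  and T_covers: "verts H \<subseteq> covered H T"
  using T_legal_dom by (auto simp: legal_dom_seqs_iff dominating_iff_covered)

lemma length_blocks [simp]: "length blocks = length T"
  by (simp add: blocks_def)

lemma nth_T_in_block:
  assumes "j < length T"
  shows "blocks ! j \<in> verts G \<and> T ! j \<in> verts (R (blocks ! j))"
proof -
  have "T ! j \<in> verts H"
    using T_verts assms by auto
  then show ?thesis
    using assms block_in_verts by (simp add: blocks_def)
qed

lemma cnbh_nth_T_iff:
  assumes "j < length T" and "w \<in> verts G" and "y \<in> verts (R w)"
  shows "y \<in> cnbh H (T ! j) \<longleftrightarrow>
    (blocks ! j = w \<and> y \<in> cnbh (R w) (T ! j)) \<or> (blocks ! j, w) \<in> edges G"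
  using cnbh_xjoin_iff[of "blocks ! j" w "T ! j" y] nth_T_in_block[OF assms(1)] assms(2,3) by auto

lemma private_neighbourE:
  assumes "j < length T"
  obtains y w where "y \<in> PN H T j" "w \<in> verts G" "y \<in> verts (R w)"
proof -
  obtain y where y: "y \<in> PN H T j"
    using T_legal assms by (auto simp: legal_def PN_eq_covered)
  have "T ! j \<in> verts H"
    using T_verts assms by auto
  then have "y \<in> verts H"
    using y cnbh_xjoin_subset by (auto simp: mem_PN_iff)
  then show ?thesis
    using that y block_in_verts by blast
qed

lemma dominating_blocks: "dominating G (set blocks)"
  unfolding dominating_iff_covered
proof
  show "set blocks \<subseteq> verts G"
    using nth_T_in_block by (auto simp: in_set_conv_nth)
  show "verts G \<subseteq> covered G blocks"
  proof
    fix v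
    assume v: "v \<in> verts G"
    then obtain y where y: "y \<in> verts (R v)"
      using verts_R_nonempty by blast
    then have "y \<in> covered H T"
      using T_covers v by (auto simp: verts_xjoin)
    then obtain j where j: "j < length T" "y \<in> cnbh H (T ! j)"
      by (auto simp: covered_def in_set_conv_nth)
    then have "v \<in> cnbh G (blocks ! j)"
      using cnbh_nth_T_iff[OF _ v y] by (auto simp: mem_cnbh_iff)
    then show "v \<in> covered G blocks"
      using j(1) by (auto simp: covered_def)
  qed
qed

lemma first_occurrence:
  assumes "v \<in> set blocks"
  shows "first v < length T" and "blocks ! first v = v"
    and "\<And>j. j < first v \<Longrightarrow> blocks ! j \<noteq> v"
proof -
  have "\<exists>k. k < length T \<and> blocks ! k = v"
    using assms by (auto simp: in_set_conv_nth)
  then show "first v < length T" and "blocks ! first v = v"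
    unfolding first_def by (metis (mono_tags, lifting) LeastI_ex)+
  show "blocks ! j \<noteq> v" if "j < first v" for j
    using that \<open>first v < length T\<close> not_less_Least[of j "\<lambda>k. k < length T \<and> blocks ! k = v"]
    by (auto simp: first_def)
qed

lemma first_le: "j < length T \<Longrightarrow> first (blocks ! j) \<le> j"
  unfolding first_def by (rule Least_le) simp

text \<open>A later occurrence of an already visited block has its private neighbours inside that block,
  since the other vertices of its closed neighbourhood are already dominated by the first occurrence.\<close>

lemma private_of_repeat_in_block:
  assumes "i < j" and "j < length T" and "blocks ! i = blocks ! j"
    and "y \<in> PN H T j" and "w \<in> verts G" and "y \<in> verts (R w)"
  shows "w = blocks ! j"
proof (rule ccontr)
  assume "w \<noteq> blocks ! j"
  then have "(blocks ! i, w) \<in> edges G"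
    using assms cnbh_nth_T_iff[OF assms(2,5,6)] by (auto simp: mem_PN_iff)
  then have "y \<in> cnbh H (T ! i)"
    using cnbh_nth_T_iff[of i w y] assms by auto
  then show False
    using assms by (auto simp: mem_PN_iff)
qed

lemma no_repeat_after_neighbour:
  assumes "i < j" and "i' < j" and "j < length T" and "blocks ! i = blocks ! j"
    and "(blocks ! i', blocks ! j) \<in> edges G"
  shows False
proof -
  obtain y w where y: "y \<in> PN H T j" "w \<in> verts G" "y \<in> verts (R w)"
    using private_neighbourE[OF assms(3)] .
  have "w = blocks ! j"
    using private_of_repeat_in_block[OF assms(1,3,4) y] .
  then have "y \<in> cnbh H (T ! i')"
    using cnbh_nth_T_iff[of i' w y] assms y by auto
  then show False
    using y(1) assms(2) by (auto simp: mem_PN_iff)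
qed

lemma set_part: "set (part v) \<subseteq> verts (R v)"
  using T_verts block_in_verts by (auto simp: part_def)

lemma legal_part:
  assumes v: "v \<in> verts G"
  shows "legal (R v) (part v)"
  unfolding part_def
proof (rule legal_filter)
  fix j
  assume j: "j < length T" and "block (T ! j) = v"
  then have bj: "blocks ! j = v"
    by (simp add: blocks_def)
  then have v_in: "v \<in> set blocks"
    using j by (metis length_blocks nth_mem)
  show "\<exists>y\<in>cnbh (R v) (T ! j). \<forall>i<j. block (T ! i) = v \<longrightarrow> y \<notin> cnbh (R v) (T ! i)"
  proof (cases "first v = j")
    case True
    then show ?thesis
      using first_occurrence(3)[OF v_in] j by (intro bexI[of _ "T ! j"]) (auto simp: blocks_def)
  next
    case False
    then have "first v < j"
      using first_le[OF j] bj by simp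
    obtain y w where y: "y \<in> PN H T j" "w \<in> verts G" "y \<in> verts (R w)"
      using private_neighbourE[OF j] .
    have "w = v"
      using private_of_repeat_in_block[OF \<open>first v < j\<close> j _ y] first_occurrence(2)[OF v_in] bj
      by simp
    have "y \<in> cnbh (R v) (T ! j)"
      using y cnbh_nth_T_iff[OF j v] \<open>w = v\<close> bj no_loop_G by (auto simp: mem_PN_iff)
    moreover have "y \<notin> cnbh (R v) (T ! i)" if "i < j" "block (T ! i) = v" for i
      using y that cnbh_nth_T_iff[of i v y] \<open>w = v\<close> j by (auto simp: mem_PN_iff blocks_def)
    ultimately show ?thesis
      by blast
  qed
qed

lemma length_part_le_gamma_gr: "v \<in> verts G \<Longrightarrow> length (part v) \<le> gamma_gr (R v)"
  using length_le_gamma_gr[OF finite_verts_R legal_part set_part] .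

lemma length_part_eq_card: "length (part v) = card {j. j < length T \<and> blocks ! j = v}"
  unfolding part_def length_filter_conv_card by (auto simp: blocks_def intro: arg_cong[where f = card])

lemma length_part_le_one:
  assumes "v \<in> set blocks" and "v \<notin> I_blocks"
  shows "length (part v) \<le> 1"
proof -
  have "v \<in> covered G (take (first v) blocks)"
    using first_occurrence(1,2)[OF assms(1)] assms(2) by (auto simp: I_blocks_def self_private_def)
  then obtain i' where i': "i' < first v" "(blocks ! i', v) \<in> edges G"
    using first_occurrence(3)[OF assms(1)] by (auto simp: mem_covered_take_iff mem_cnbh_iff)
  have "j1 = j2" if "j1 < length T" "blocks ! j1 = v" "j2 < length T" "blocks ! j2 = v" for j1 j2
  proof (rule ccontr)
    assume "j1 \<noteq> j2"
    moreover have "i' < j1" and "i' < j2"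
      using that i'(1) first_le by fastforce+
    ultimately show False
      using no_repeat_after_neighbour that i'(2) by (metis linorder_neqE_nat)
  qed
  then have "card {j. j < length T \<and> blocks ! j = v} \<le> 1"
    by (auto simp: card_le_Suc0_iff_eq)
  then show ?thesis
    by (simp add: length_part_eq_card)
qed

lemma I_blocks_subset: "I_blocks \<subseteq> set (prune G blocks)"
  using I_seq_subset_set[OF prune_legal_dom_seq[OF dominating_blocks]]
  by (simp add: I_seq_prune[OF dominating_blocks] I_blocks_def)

lemma length_part_lt_gamma_gr:
  assumes k: "k < length T" and y: "y \<in> PN H T k" "w \<in> verts G" "y \<in> verts (R w)"
    and w: "w \<in> set blocks" "first w < k" and adj: "(blocks ! k, w) \<in> edges G"
  shows "length (part w) < gamma_gr (R w)"
proof -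
  have before_k: "j < k" if "j < length T" "blocks ! j = w" for j
  proof (rule ccontr)
    assume "\<not> j < k"
    moreover have "j \<noteq> k"
      using that adj no_loop_G by auto
    ultimately have "k < j"
      by simp
    then show False
      using no_repeat_after_neighbour[of "first w" j k] that first_occurrence(2)[OF w(1)] w(2) adj by simp
  qed
  have "y \<notin> covered (R w) (part w)"
  proof
    assume "y \<in> covered (R w) (part w)"
    then obtain j where j: "j < length T" "blocks ! j = w" "y \<in> cnbh (R w) (T ! j)"
      by (auto simp: covered_def part_def in_set_conv_nth blocks_def)
    then have "y \<in> cnbh H (T ! j)"
      using cnbh_nth_T_iff[OF j(1) y(2,3)] by simp
    then show False
      using before_k[OF j(1,2)] y(1) by (auto simp: mem_PN_iff)
  qed
  then have "legal (R w) (part w @ [y])"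
    unfolding legal_snoc using legal_part[OF y(2)] cnbh_self[of y "R w"] by blast
  moreover have "set (part w @ [y]) \<subseteq> verts (R w)"
    using set_part y(3) by auto
  ultimately have "length (part w @ [y]) \<le> gamma_gr (R w)"
    using length_le_gamma_gr finite_verts_R[OF y(2)] by blast
  then show ?thesis
    by simp
qed

text \<open>The condition on the blocks entered before \<open>u\<close> is what makes the partners of distinct
  dropped blocks distinct.\<close>

lemma dropped_block_partner:
  assumes "u \<in> dropped"
  shows "\<exists>w\<in>I_blocks. (u, w) \<in> edges G \<and> (\<forall>j<first u. (blocks ! j, w) \<notin> edges G)
    \<and> length (part w) < gamma_gr (R w)"
proof -
  have u: "u \<in> set blocks" "u \<notin> set (prune G blocks)"
    using assms by (auto simp: dropped_def)
  note k = first_occurrence[OF u(1)]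
  have covered_u: "cnbh G u \<subseteq> covered G (take (first u) blocks)"
    using nth_mem_prune[of "first u" blocks G] k u(2) by auto
  obtain y w where y: "y \<in> PN H T (first u)" "w \<in> verts G" "y \<in> verts (R w)"
    using private_neighbourE[OF k(1)] .
  have not_adj: "(blocks ! j, w) \<notin> edges G" if "j < first u" for j
    using y that cnbh_nth_T_iff[of j w y] k(1) by (auto simp: mem_PN_iff)
  have "w \<in> cnbh G u"
    using y cnbh_nth_T_iff[OF k(1) y(2,3)] k(2) by (auto simp: mem_PN_iff mem_cnbh_iff)
  then have "w \<in> covered G (take (first u) blocks)"
    using covered_u by blast
  then obtain i where i: "i < first u" "w \<in> cnbh G (blocks ! i)"
    by (auto simp: mem_covered_take_iff)
  then have "blocks ! i = w"
    using not_adj by (auto simp: mem_cnbh_iff)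
  then have "w \<noteq> u"
    using k(3)[OF i(1)] by simp
  then have uw: "(u, w) \<in> edges G"
    using \<open>w \<in> cnbh G u\<close> by (simp add: mem_cnbh_iff)
  have w_in: "w \<in> set blocks"
    using i(1) k(1) \<open>blocks ! i = w\<close> by (metis length_blocks nth_mem order.strict_trans)
  note fw = first_occurrence[OF w_in]
  have "first w < first u"
    using first_le[of i] i(1) k(1) \<open>blocks ! i = w\<close> by simp
  have "w \<notin> covered G (take (first w) blocks)"
    using fw(3) not_adj \<open>first w < first u\<close> by (auto simp: mem_covered_take_iff mem_cnbh_iff)
  then have "w \<in> I_blocks"
    using fw(1,2) by (auto simp: I_blocks_def self_private_def)
  moreover have "length (part w) < gamma_gr (R w)"
    using length_part_lt_gamma_gr[OF k(1) y w_in \<open>first w < first u\<close>] uw k(2) by simp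
  ultimately show ?thesis
    using uw not_adj by blast
qed

lemma dropped_blocks_inject:
  "\<exists>g. inj_on g dropped \<and> g ` dropped \<subseteq> I_blocks
     \<and> (\<forall>u\<in>dropped. length (part (g u)) < gamma_gr (R (g u)))"
proof -
  have "\<forall>u\<in>dropped. \<exists>w. w \<in> I_blocks \<and> (u, w) \<in> edges G
      \<and> (\<forall>j<first u. (blocks ! j, w) \<notin> edges G) \<and> length (part w) < gamma_gr (R w)"
    using dropped_block_partner by blast
  then obtain g where g: "\<forall>u\<in>dropped. g u \<in> I_blocks \<and> (u, g u) \<in> edges G
      \<and> (\<forall>j<first u. (blocks ! j, g u) \<notin> edges G) \<and> length (part (g u)) < gamma_gr (R (g u))"
    by (metis bchoice)
  have not_before: "\<not> first u < first u'" if "u \<in> dropped" "u' \<in> dropped" "g u = g u'" for u u'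
  proof
    assume "first u < first u'"
    then have "(blocks ! first u, g u') \<notin> edges G"
      using g that(2) by blast
    moreover have "(u, g u) \<in> edges G"
      using g that(1) by blast
    ultimately show False
      using first_occurrence(2)[of u] that by (simp add: dropped_def)
  qed
  have "inj_on g dropped"
  proof (rule inj_onI)
    fix u u'
    assume u: "u \<in> dropped" and u': "u' \<in> dropped" and eq: "g u = g u'"
    then have "first u = first u'"
      using not_before[OF u u' eq] not_before[OF u' u eq[symmetric]] by linarith
    then show "u = u'"
      using first_occurrence(2) u u' by (metis DiffD1 dropped_def)
  qed
  then show ?thesis
    using g by blast
qed

lemma sum_part_add_card_dropped_le:
  "(\<Sum>v\<in>I_blocks. length (part v)) + card dropped \<le> (\<Sum>v\<in>I_blocks. gamma_gr (R v))"
proof -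
  obtain g where g: "inj_on g dropped" "g ` dropped \<subseteq> I_blocks"
    "\<And>u. u \<in> dropped \<Longrightarrow> length (part (g u)) < gamma_gr (R (g u))"
    using dropped_blocks_inject by blast
  have "set blocks \<subseteq> verts G"
    using dominating_blocks by (simp add: dominating_iff_covered)
  then have "I_blocks \<subseteq> verts G"
    using I_blocks_subset set_prune_subset[of G blocks] by blast
  moreover have "finite I_blocks"
    using \<open>I_blocks \<subseteq> verts G\<close> finite_verts_G finite_subset by blast
  ultimately show ?thesis
    by (intro sum_add_card_le_sum[where g = g]) (use g length_part_le_gamma_gr in blast)+
qed

lemma length_T_le_sum_part:
  "length T \<le> (\<Sum>v\<in>I_blocks. length (part v)) + card (set blocks - I_blocks)"
proof -
  have I_sub: "I_blocks \<subseteq> set blocks"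
    using I_blocks_subset set_prune_subset[of G blocks] by blast
  have "length T = (\<Sum>v\<in>set blocks. length (part v))"
    using length_eq_sum_length_filter[of "set blocks" block T] by (simp add: part_def blocks_def)
  also have "\<dots> = (\<Sum>v\<in>set blocks - I_blocks. length (part v))
      + (\<Sum>v\<in>I_blocks. length (part v))"
    using sum.subset_diff[OF I_sub] by simp
  also have "(\<Sum>v\<in>set blocks - I_blocks. length (part v)) \<le> card (set blocks - I_blocks)"
    using sum_bounded_above[of "set blocks - I_blocks" "\<lambda>v. length (part v)" 1] length_part_le_one
    by simp
  finally show ?thesis
    by simp
qed

lemma length_T_le_pruned:
  "length T + card (I_seq G (prune G blocks))
     \<le> length (prune G blocks) + (\<Sum>v\<in>I_seq G (prune G blocks). gamma_gr (R v))"
proof -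
  let ?P = "set (prune G blocks)"
  have I_eq: "I_seq G (prune G blocks) = I_blocks"
    by (simp add: I_seq_prune[OF dominating_blocks] I_blocks_def)
  have "length (prune G blocks) = card ?P"
    using distinct_card[OF legal_imp_distinct[OF legal_prune[of G blocks]]] by simp
  moreover have I_sub: "I_blocks \<subseteq> set blocks" and P_sub: "?P \<subseteq> set blocks"
    using I_blocks_subset set_prune_subset[of G blocks] by blast+
  have "card (set blocks - I_blocks) = card (set blocks) - card I_blocks"
    and "card dropped = card (set blocks) - card ?P"
    using card_Diff_subset[OF finite_subset[OF I_sub] I_sub]
      card_Diff_subset[OF finite_subset[OF P_sub] P_sub] by (simp_all add: dropped_def)
  moreover have "card I_blocks \<le> card (set blocks)" and "card ?P \<le> card (set blocks)"
    using card_mono[OF _ I_sub] card_mono[OF _ P_sub] by simp_all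
  ultimately show ?thesis
    unfolding I_eq using length_T_le_sum_part sum_part_add_card_dropped_le by linarith
qed

end

lemma (in xjoin_family) grundy_upper_bound:
  assumes "T \<in> legal_dom_seqs H"
  shows "\<exists>S\<in>legal_dom_seqs G.
    length T + card (I_seq G S) \<le> length S + (\<Sum>v\<in>I_seq G S. gamma_gr (R v))"
proof -
  interpret xjoin_legal_seq G R T
    using assms by unfold_locales
  show ?thesis
    using length_T_le_pruned prune_legal_dom_seq[OF dominating_blocks] by blast
qed

context xjoin_family
begin

lemma gamma_gr_I_add_sum_le:
  "gamma_gr_I G I + ereal (\<Sum>v\<in>I. real (gamma_gr (R v))) - ereal (real (card I))
     \<le> ereal (real (gamma_gr H))"
proof -
  consider "gamma_gr_I G I = -\<infinity>"
    | S where "S \<in> legal_dom_seqs G" "I_seq G S = I" "gamma_gr_I G I = ereal (length S)"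
    using gamma_gr_I_cases[OF finite_verts_G] by blast
  then show ?thesis
  proof cases
    case 2
    then have "real (length S + (\<Sum>v\<in>I. gamma_gr (R v))) \<le> real (gamma_gr H + card I)"
      using grundy_lower_bound[OF 2(1)] by (simp only: of_nat_le_iff)
    then show ?thesis
      using 2(3) by simp
  qed simp
qed

lemma gamma_gr_I_add_sum_attained:
  "\<exists>I. independent G I \<and> ereal (real (gamma_gr H))
     \<le> gamma_gr_I G I + ereal (\<Sum>v\<in>I. real (gamma_gr (R v))) - ereal (real (card I))"
proof -
  obtain T where T: "T \<in> legal_dom_seqs H" "length T = gamma_gr H"
    using gamma_gr_attained[OF finite_verts_xjoin] by blast
  then obtain S where S: "S \<in> legal_dom_seqs G"
    and le: "length T + card (I_seq G S) \<le> length S + (\<Sum>v\<in>I_seq G S. gamma_gr (R v))"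
    using grundy_upper_bound by blast
  have "real (length T + card (I_seq G S)) \<le> real (length S + (\<Sum>v\<in>I_seq G S. gamma_gr (R v)))"
    using le by (simp only: of_nat_le_iff)
  moreover have "ereal (length S) \<le> gamma_gr_I G (I_seq G S)"
    using gamma_gr_I_ge[OF finite_verts_G S] .
  ultimately have "ereal (real (gamma_gr H)) \<le> gamma_gr_I G (I_seq G S)
      + ereal (\<Sum>v\<in>I_seq G S. real (gamma_gr (R v))) - ereal (real (card (I_seq G S)))"
    using T(2) by (cases "gamma_gr_I G (I_seq G S)") auto
  then show ?thesis
    using independent_I_seq[OF graph_G S] by blast
qed

end

theorem theorem1:
  fixes G :: "'a graph" and R :: "'a \<Rightarrow> 'b graph"
  assumes "graph G"
    and "\<forall>v\<in>verts G. graph (R v)"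
    and "\<forall>v\<in>verts G. verts (R v) \<noteq> {}"
    and "\<forall>u\<in>verts G. \<forall>v\<in>verts G. u \<noteq> v \<longrightarrow> verts (R u) \<inter> verts (R v) = {}"
  shows "ereal (real (gamma_gr (xjoin G R))) =
    Max {gamma_gr_I G I + ereal (\<Sum>v\<in>I. real (gamma_gr (R v))) - ereal (real (card I))
         | I. independent G I}"
proof -
  interpret xjoin_family G R
    using assms by unfold_locales auto
  let ?F = "\<lambda>I. gamma_gr_I G I + ereal (\<Sum>v\<in>I. real (gamma_gr (R v))) - ereal (real (card I))"
  have "{I. independent G I} \<subseteq> Pow (verts G)"
    by (auto simp: independent_def)
  then have "finite (?F ` {I. independent G I})"
    using finite_verts_G finite_subset by blast
  moreover obtain I where I: "independent G I" "ereal (real (gamma_gr H)) \<le> ?F I"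
    using gamma_gr_I_add_sum_attained by blast
  then have "ereal (real (gamma_gr H)) = ?F I"
    using antisym[OF I(2) gamma_gr_I_add_sum_le[of I]] by blast
  ultimately show ?thesis
    using I(1) gamma_gr_I_add_sum_le by (intro Max_eqI[symmetric]) (auto simp: setcompr_eq_image)
qed

end
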